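(* Let $\Theta\subset\mathbb{R}^n$ be a symmetric set and $C=\{X\in\mathbf{S}^n:\lambda(X)\in\Theta\}$. Then for any $X\in C$, $$T_C(X)=\{H\in\mathbf{S}^n:\ \lambda'(X;H)\in T_\Theta(\lambda(X))\}.$$
   Context: $\mathbf{S}^n$: real symmetric $n\times n$ matrices. $\lambda(X)$: eigenvalue vector in nonincreasing order. $\Theta$ symmetric: $P\Theta=\Theta$ for all permutation matrices $P$. Tangent cone: $T_C(\bar x)=\{w:\exists t_k\downarrow0,\ w_k\to w,\ \bar x+t_kw_k\in C\}$. $\lambda'(X;H)=\lim_{t\downarrow0}(\lambda(X+tH)-\lambda(X))/t$, which exists and equals $\big(\lambda(U_{\alpha_1}^\top HU_{\alpha_1}),\dots,\lambda(U_{\alpha_r}^\top HU_{\alpha_r})\big)$, where $\mu_1>\dots>\mu_r$ are the distinct eigenvalues of $X$, $\alpha_m=\{i:\lambda_i(X)=\mu_m\}$, $U$ is orthogonal with $X=U\mathrm{Diag}(\lambda(X))U^\top$ and $U_{\alpha_m}$ consists of the columns of $U$ indexed by $\alpha_m$. *)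

theory Defs
  imports "HOL-Analysis.Analysis"
begin

text \<open>Vectors in R^n are \<open>real ^ 'n\<close>, n x n matrices are \<open>real ^ 'n ^ 'n\<close>,
  where the finite index type 'n carries a linear order (needed to speak of
  "nonincreasing order").\<close>

definition sym_mats :: "(real ^ 'n ^ 'n) set" where
  "sym_mats = {X. transpose X = X}"

definition Diag :: "real ^ 'n \<Rightarrow> real ^ 'n ^ 'n" where
  "Diag d = (\<chi> i j. if i = j then d $ i else 0)"

definition perm_act :: "('n \<Rightarrow> 'n) \<Rightarrow> real ^ 'n \<Rightarrow> real ^ 'n" where
  "perm_act p x = (\<chi> i. x $ p i)"

definition symmetric_set :: "(real ^ 'n) set \<Rightarrow> bool" where
  "symmetric_set \<Theta> \<longleftrightarrow> (\<forall>p. p permutes (UNIV :: 'n set) \<longrightarrow> perm_act p ` \<Theta> = \<Theta>)"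

definition eigvec :: "real ^ ('n::{finite,linorder}) ^ ('n::{finite,linorder}) \<Rightarrow> real ^ ('n::{finite,linorder})" where
  "eigvec X = (THE d. (\<forall>i j. i \<le> j \<longrightarrow> d $ j \<le> d $ i) \<and>
       (\<exists>U. orthogonal_matrix U \<and> X = U ** Diag d ** transpose U))"

definition eigvec_dir :: "real ^ ('n::{finite,linorder}) ^ ('n::{finite,linorder}) \<Rightarrow> real ^ ('n::{finite,linorder}) ^ ('n::{finite,linorder}) \<Rightarrow> real ^ ('n::{finite,linorder})" where
  "eigvec_dir X H = Lim (at_right 0) (\<lambda>t. scaleR (1 / t) (eigvec (X + scaleR t H) - eigvec X))"

definition tangent_cone :: "'a::real_normed_vector set \<Rightarrow> 'a \<Rightarrow> 'a set" where
  "tangent_cone C x = {w. \<exists>t w'. (\<forall>k. t k > (0::real)) \<and> t \<longlonglongrightarrow> 0 \<and>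
       w' \<longlonglongrightarrow> w \<and> (\<forall>k. x + scaleR (t k) (w' k) \<in> C)}"

end

theory Submission
  imports Defs
begin

(*
  For an initial segment K of indices let f_K(X) be the sum of the eigenvalues lambda_i(X), i in K.
  By Ky Fan's principle f_K(X) is the maximum of sum_{i in K} u_i . X u_i over orthonormal
  families u, hence convex and Lipschitz in X. As lambda_j = f_{..j} - f_{..<j}, the eigenvalue
  map is Lipschitz and has one-sided directional derivatives lambda'(X;H).

  If X + t_k w_k lies in C with w_k --> H, then lambda(X) + t_k v_k lies in Theta for the difference
  quotients v_k of lambda, and v_k --> lambda'(X;H) since lambda is Lipschitz. Conversely, if
  lambda(X) + t_k d_k lies in Theta with d_k --> lambda'(X;H), let V_k diagonalize X + t_k H: the
  matrices V_k Diag(lambda(X) + t_k d_k) V_k^T belong to C because Theta is permutation invariant,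
  and they differ from X + t_k H by o(t_k).
*)

section \<open>Spectral theorem\<close>

lemma inner_symmetric_matrix_vector:
  fixes A :: "real^'n^'n"
  assumes "transpose A = A"
  shows "x \<bullet> (A *v y) = (A *v x) \<bullet> y"
  by (metis assms dot_lmul_matrix transpose_matrix_vector)

lemma linear_coeff_zero_if_quadratic_nonpos:
  fixes c K :: real
  assumes "\<And>s. 2 * s * c + s\<^sup>2 * K \<le> 0"
  shows "c = 0"
proof -
  define k where "k = \<bar>K\<bar> + 1"
  have k: "k > 0" "2 * k + K > 0" unfolding k_def by (simp, smt (verit) abs_ge_minus_self)
  have "(2 * (c / k) * c + (c / k)\<^sup>2 * K) * k\<^sup>2 = c\<^sup>2 * (2 * k + K)"
    using k by (simp add: power2_eq_square field_simps)
  moreover have "(2 * (c / k) * c + (c / k)\<^sup>2 * K) * k\<^sup>2 \<le> 0"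
    using assms[of "c / k"] by (simp add: mult_nonpos_nonneg)
  ultimately have "c\<^sup>2 * (2 * k + K) \<le> 0" by simp
  with k show ?thesis
    by (metis mult_le_0_iff not_less power2_less_eq_zero_iff)
qed

lemma rayleigh_maximizer_orthogonal:
  fixes A :: "real^'n^'n"
  assumes symA: "transpose A = A" and S: "subspace S" and v: "v \<in> S" "v \<bullet> v = 1"
    and max: "\<And>y. y \<in> S \<Longrightarrow> y \<bullet> (A *v y) \<le> (v \<bullet> (A *v v)) * (y \<bullet> y)"
    and w: "w \<in> S" "w \<bullet> v = 0"
  shows "w \<bullet> (A *v v) = 0"
proof (rule linear_coeff_zero_if_quadratic_nonpos)
  fix s :: real
  define m where "m = v \<bullet> (A *v v)"
  have "v + s *\<^sub>R w \<in> S" using v w S by (simp add: subspace_add subspace_scale)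
  from max[OF this]
  have "(v + s *\<^sub>R w) \<bullet> (A *v (v + s *\<^sub>R w)) \<le> m * ((v + s *\<^sub>R w) \<bullet> (v + s *\<^sub>R w))"
    by (simp add: m_def)
  moreover have "v \<bullet> (A *v w) = w \<bullet> (A *v v)"
    using inner_symmetric_matrix_vector[OF symA, of v w] by (simp add: inner_commute)
  ultimately show "2 * s * (w \<bullet> (A *v v)) + s\<^sup>2 * (w \<bullet> (A *v w) - m * (w \<bullet> w)) \<le> 0"
    using v w
    by (simp add: matrix_vector_right_distrib inner_commute[of w v] m_def power2_eq_square
        algebra_simps)
qed

lemma invariant_subspace_has_unit_eigenvector:
  fixes A :: "real^'n^'n"
  assumes symA: "transpose A = A" and S: "subspace S"
    and inv: "\<And>x. x \<in> S \<Longrightarrow> A *v x \<in> S" and nonzero: "S \<noteq> {0}"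
  obtains v c where "v \<in> S" "norm v = 1" "A *v v = c *\<^sub>R v"
proof -
  let ?K = "S \<inter> sphere 0 1"
  have compact: "compact ?K"
    using compact_sphere closed_subspace[OF S] by (metis Int_commute compact_Int_closed)
  obtain x where "x \<in> S" "x \<noteq> 0" using nonzero S subspace_0 by blast
  then have "x /\<^sub>R norm x \<in> ?K" using S by (simp add: subspace_scale)
  then have "?K \<noteq> {}" by blast
  then have "\<exists>v\<in>?K. \<forall>y\<in>?K. y \<bullet> (A *v y) \<le> v \<bullet> (A *v v)"
    by (intro continuous_attains_sup[OF compact] continuous_intros)
  then obtain v where v: "v \<in> ?K" and vmax: "\<And>y. y \<in> ?K \<Longrightarrow> y \<bullet> (A *v y) \<le> v \<bullet> (A *v v)"
    by blast
  define m where "m = v \<bullet> (A *v v)"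
  have vS: "v \<in> S" and vv: "v \<bullet> v = 1" using v by (auto simp: norm_eq_1)
  have max: "y \<bullet> (A *v y) \<le> m * (y \<bullet> y)" if "y \<in> S" for y
  proof (cases "y = 0")
    case False
    then have "y /\<^sub>R norm y \<in> ?K" using that S by (simp add: subspace_scale)
    from vmax[OF this] have "(y \<bullet> (A *v y)) / (norm y)\<^sup>2 \<le> m"
      by (simp add: m_def matrix_vector_mult_scaleR power2_eq_square divide_inverse ac_simps)
    with False show ?thesis by (simp add: power2_norm_eq_inner field_simps)
  qed simp
  define r where "r = A *v v - m *\<^sub>R v"
  have rS: "r \<in> S" using inv vS S by (simp add: r_def subspace_diff subspace_scale)
  have rv: "r \<bullet> v = 0"
    using vv by (simp add: r_def inner_diff_left m_def) (simp add: inner_commute)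
  have "r \<bullet> (A *v v) = 0"
    using rayleigh_maximizer_orthogonal[OF symA S vS vv _ rS rv] max by (simp add: m_def)
  then have "r \<bullet> r = 0" using rv by (simp add: r_def inner_diff_right)
  then have "A *v v = m *\<^sub>R v" by (simp add: r_def)
  with vS vv that show ?thesis by (simp add: norm_eq_1)
qed

lemma span_insert_unit_orthogonal_complement:
  assumes S: "subspace S" and v: "v \<in> S" "v \<bullet> v = 1"
    and B: "S \<inter> {x. v \<bullet> x = 0} \<subseteq> span B"
  shows "S \<subseteq> span (insert v B)"
proof
  fix x assume x: "x \<in> S"
  have "x - (v \<bullet> x) *\<^sub>R v \<in> S \<inter> {x. v \<bullet> x = 0}"
    using x v S by (simp add: subspace_diff subspace_scale inner_diff_right)
  then have "x - (v \<bullet> x) *\<^sub>R v \<in> span (insert v B)"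
    using B span_mono[of B "insert v B"] by blast
  moreover have "(v \<bullet> x) *\<^sub>R v \<in> span (insert v B)" by (simp add: span_base span_mul)
  ultimately have "x - (v \<bullet> x) *\<^sub>R v + (v \<bullet> x) *\<^sub>R v \<in> span (insert v B)" by (rule span_add)
  then show "x \<in> span (insert v B)" by simp
qed

lemma invariant_subspace_orthonormal_eigenbasis:
  fixes A :: "real^'n^'n"
  assumes symA: "transpose A = A"
  shows "subspace S \<Longrightarrow> (\<And>x. x \<in> S \<Longrightarrow> A *v x \<in> S) \<Longrightarrow>
    \<exists>B. B \<subseteq> S \<and> pairwise orthogonal B \<and> (\<forall>x\<in>B. norm x = 1) \<and>
      (\<forall>x\<in>B. \<exists>c. A *v x = c *\<^sub>R x) \<and> S \<subseteq> span B"
proof (induction "dim S" arbitrary: S rule: less_induct)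
  case less
  show ?case
  proof (cases "S = {0}")
    case True
    then show ?thesis by (intro exI[of _ "{}"]) auto
  next
    case False
    obtain v c where vS: "v \<in> S" and nv: "norm v = 1" and ev: "A *v v = c *\<^sub>R v"
      using invariant_subspace_has_unit_eigenvector[OF symA less.prems False] by blast
    have vv: "v \<bullet> v = 1" using nv by (simp add: norm_eq_1)
    define S' where "S' = S \<inter> {x. v \<bullet> x = 0}"
    have S': "subspace S'" unfolding S'_def by (intro subspace_inter less.prems subspace_hyperplane)
    have "A *v x \<in> S'" if "x \<in> S'" for x
    proof -
      have "v \<bullet> (A *v x) = c * (v \<bullet> x)"
        using inner_symmetric_matrix_vector[OF symA, of v x] ev by simp
      with that less.prems(2) show ?thesis by (simp add: S'_def)
    qed
    moreover have "dim S' < dim S"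
    proof (rule dim_psubset)
      have "S' \<subset> S" using vS vv unfolding S'_def by force
      then show "span S' \<subset> span S" using S' less.prems(1) by (simp add: span_eq_iff[THEN iffD2])
    qed
    ultimately obtain B where B: "B \<subseteq> S'" "pairwise orthogonal B" "\<forall>x\<in>B. norm x = 1"
      "\<forall>x\<in>B. \<exists>c. A *v x = c *\<^sub>R x" "S' \<subseteq> span B"
      using less.hyps[OF _ S'] by blast
    show ?thesis
    proof (intro exI[of _ "insert v B"] conjI)
      show "insert v B \<subseteq> S" using B(1) vS by (auto simp: S'_def)
      show "pairwise orthogonal (insert v B)"
        using B(1,2) by (auto simp: pairwise_insert S'_def orthogonal_def inner_commute)
      show "S \<subseteq> span (insert v B)"
        using span_insert_unit_orthogonal_complement[OF less.prems(1) vS vv] B(5) by (simp add: S'_def)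
    qed (use B(3,4) nv ev in auto)
  qed
qed

lemma orthonormal_eigenvectors_diagonalize:
  fixes A :: "real^'n^'n" and f :: "'n \<Rightarrow> real^'n"
  assumes unit: "\<And>j. norm (f j) = 1" and orth: "\<And>i j. i \<noteq> j \<Longrightarrow> orthogonal (f i) (f j)"
    and eigen: "\<And>j. A *v f j = d $ j *\<^sub>R f j"
  defines "U \<equiv> \<chi> i j. f j $ i"
  shows "orthogonal_matrix U" "A = U ** Diag d ** transpose U"
proof -
  have column: "column j U = f j" for j by (simp add: U_def column_def)
  show U: "orthogonal_matrix U"
    by (simp add: orthogonal_matrix_orthonormal_columns column unit orth)
  have "(A ** U) $ i $ j = (U ** Diag d) $ i $ j" for i j
  proof -
    have "(A ** U) $ i $ j = (A *v f j) $ i"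
      by (simp add: matrix_matrix_mult_def matrix_vector_mult_def U_def)
    also have "\<dots> = (U ** Diag d) $ i $ j"
      by (simp add: eigen matrix_matrix_mult_def Diag_def U_def if_distrib[of "\<lambda>x. _ * x"]
          sum.delta' cong: if_cong)
    finally show ?thesis .
  qed
  then have "A ** U = U ** Diag d" by (simp add: vec_eq_iff)
  then show "A = U ** Diag d ** transpose U"
    using U by (metis matrix_mul_assoc matrix_mul_rid orthogonal_matrix_def)
qed

lemma symmetric_matrix_diagonalizable:
  fixes A :: "real^'n^'n"
  assumes symA: "transpose A = A"
  obtains U d where "orthogonal_matrix U" "A = U ** Diag d ** transpose U"
proof -
  obtain B where B: "pairwise orthogonal B" "\<forall>x\<in>B. norm x = 1" "\<forall>x\<in>B. \<exists>c. A *v x = c *\<^sub>R x"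
    "UNIV \<subseteq> span B"
    using invariant_subspace_orthonormal_eigenbasis[OF symA, of UNIV] by auto
  have indep: "independent B"
    using B(1,2) by (intro pairwise_orthogonal_independent) auto
  then have "card B = CARD('n)"
    using basis_card_eq_dim[of B UNIV] B(4) by auto
  moreover have "finite B" using indep finiteI_independent by blast
  ultimately obtain f where f: "bij_betw f (UNIV::'n set) B"
    using finite_same_card_bij[of "UNIV::'n set" B] by auto
  then have fB: "f j \<in> B" for j by (auto simp: bij_betw_def)
  have "\<forall>j. \<exists>c. A *v f j = c *\<^sub>R f j" using B(3) fB by blast
  then obtain c where "\<And>j. A *v f j = c j *\<^sub>R f j" by metis
  then have "A *v f j = (\<chi> j. c j) $ j *\<^sub>R f j" for j by simp
  moreover have "i \<noteq> j \<Longrightarrow> orthogonal (f i) (f j)" for i j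
    using B(1) f by (auto simp: pairwise_def bij_betw_def inj_on_def)
  ultimately show ?thesis
    using orthonormal_eigenvectors_diagonalize that B(2) fB by metis
qed

section \<open>Sorted spectral decompositions and Ky Fan's principle\<close>

definition nonincreasing :: "real^'n::{finite,linorder} \<Rightarrow> bool" where
  "nonincreasing d \<longleftrightarrow> (\<forall>i j. i \<le> j \<longrightarrow> d $ j \<le> d $ i)"

lemma sum_weighted_transpose_diff:
  fixes w g :: "'n::finite \<Rightarrow> real"
  assumes "i \<noteq> j"
  shows "(\<Sum>k\<in>UNIV. w k * g ((p \<circ> Transposition.transpose i j) k)) - (\<Sum>k\<in>UNIV. w k * g (p k))
    = (w i - w j) * (g (p j) - g (p i))"
proof -
  have split: "(\<Sum>k\<in>UNIV. w k * g (r k)) = w i * g (r i) + w j * g (r j) + (\<Sum>k\<in>-{i,j}. w k * g (r k))"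
    for r
    using assms sum.subset_diff[of "{i, j}" UNIV "\<lambda>k. w k * g (r k)"] by (simp add: Compl_eq_Diff_UNIV)
  have "(\<Sum>k\<in>-{i,j}. w k * g ((p \<circ> Transposition.transpose i j) k)) = (\<Sum>k\<in>-{i,j}. w k * g (p k))"
    by (rule sum.cong) (auto simp: Transposition.transpose_def)
  then show ?thesis
    using split[of "p \<circ> Transposition.transpose i j"] split[of p]
    by (simp add: Transposition.transpose_def algebra_simps)
qed

lemma sorting_permutation_exists:
  fixes d :: "real^'n::{finite,linorder}"
  obtains p where "p permutes UNIV" "nonincreasing (perm_act p d)"
proof -
  define w :: "'n \<Rightarrow> real" where "w k = real (card {j. j < k})" for k
  have w: "w i < w j" if "i < j" for i j
  proof -
    have "{k. k < i} \<subset> {k. k < j}" using that by auto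
    then show ?thesis by (simp add: w_def psubset_card_mono)
  qed
  \<comment> \<open>Exchange argument: as \<open>w\<close> increases, a minimiser of \<open>F\<close> has no inversion.\<close>
  define F where "F p = (\<Sum>k\<in>UNIV. w k * d $ p k)" for p
  have "finite {p. p permutes (UNIV::'n set)}" by (simp add: finite_permutations)
  moreover have "{p. p permutes (UNIV::'n set)} \<noteq> {}" using permutes_id by blast
  ultimately obtain p where "is_arg_min F (\<lambda>p. p \<in> {p. p permutes UNIV}) p"
    using ex_is_arg_min_if_finite by blast
  then have p: "p permutes UNIV" and min: "\<And>q. q permutes UNIV \<Longrightarrow> \<not> F q < F p"
    unfolding is_arg_min_def by auto
  have "d $ p j \<le> d $ p i" if "i < j" for i j
  proof (rule ccontr)
    assume "\<not> d $ p j \<le> d $ p i"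
    define q where "q = p \<circ> Transposition.transpose i j"
    have "q permutes UNIV"
      unfolding q_def by (intro permutes_compose[OF permutes_swap_id p]) auto
    moreover have "F q - F p = (w i - w j) * (d $ p j - d $ p i)"
      using sum_weighted_transpose_diff[of i j w "\<lambda>k. d $ k" p] \<open>i < j\<close> by (simp add: F_def q_def)
    moreover have "(w i - w j) * (d $ p j - d $ p i) < 0"
      using w[OF \<open>i < j\<close>] \<open>\<not> d $ p j \<le> d $ p i\<close> by (simp add: mult_neg_pos)
    ultimately show False using min by fastforce
  qed
  then have "nonincreasing (perm_act p d)"
    by (auto simp: nonincreasing_def perm_act_def le_less)
  with p that show ?thesis by blast
qed

lemma diagonalization_entry:
  "(U ** Diag d ** transpose U) $ a $ b = (\<Sum>k\<in>UNIV. U $ a $ k * d $ k * U $ b $ k)"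
  by (simp add: matrix_matrix_mult_def Diag_def transpose_def if_distrib[of "\<lambda>x. _ * x"] sum.delta'
      cong: if_cong)

lemma diagonalization_symmetric:
  "transpose (U ** Diag d ** transpose U) = U ** Diag d ** transpose U"
proof -
  have "(U ** Diag d ** transpose U) $ a $ b = (U ** Diag d ** transpose U) $ b $ a" for a b
    unfolding diagonalization_entry by (simp add: ac_simps)
  then show ?thesis by (simp add: vec_eq_iff transpose_def)
qed

lemma linear_diagonalization: "linear (\<lambda>d. U ** Diag d ** transpose U)"
  by (rule linearI)
    (simp_all add: vec_eq_iff diagonalization_entry sum.distrib sum_distrib_left algebra_simps)

lemma norm_diagonalization_le:
  fixes V :: "real^'n^'n"
  assumes V: "orthogonal_matrix V"
  shows "norm (V ** Diag e ** transpose V) \<le> real CARD('n) ^ 3 * norm e"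
proof -
  define M where "M = V ** Diag e ** transpose V"
  have V1: "\<bar>V $ a $ k\<bar> \<le> 1" for a k
    using V component_le_norm_cart[of "column k V" a]
    unfolding orthogonal_matrix_orthonormal_columns by (simp add: column_def)
  have entry: "\<bar>M $ a $ b\<bar> \<le> real CARD('n) * norm e" for a b
  proof -
    have "\<bar>M $ a $ b\<bar> \<le> (\<Sum>k\<in>UNIV. \<bar>V $ a $ k\<bar> * \<bar>e $ k\<bar> * \<bar>V $ b $ k\<bar>)"
      unfolding M_def diagonalization_entry abs_mult[symmetric] by (rule sum_abs)
    also have "\<dots> \<le> (\<Sum>k\<in>(UNIV::'n set). norm e)"
    proof (rule sum_mono)
      fix k
      have "\<bar>V $ a $ k\<bar> * \<bar>e $ k\<bar> * \<bar>V $ b $ k\<bar> \<le> 1 * \<bar>e $ k\<bar> * 1"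
        by (intro mult_mono V1) simp_all
      then show "\<bar>V $ a $ k\<bar> * \<bar>e $ k\<bar> * \<bar>V $ b $ k\<bar> \<le> norm e"
        using component_le_norm_cart[of e k] by simp
    qed
    finally show ?thesis by simp
  qed
  have "norm M \<le> (\<Sum>a\<in>UNIV. norm (M $ a))"
    unfolding norm_vec_def by (rule L2_set_le_sum) simp
  also have "\<dots> \<le> (\<Sum>a\<in>UNIV. \<Sum>b\<in>UNIV. \<bar>M $ a $ b\<bar>)"
    by (intro sum_mono norm_le_l1_cart)
  also have "\<dots> \<le> (\<Sum>a\<in>(UNIV::'n set). \<Sum>b\<in>(UNIV::'n set). real CARD('n) * norm e)"
    by (intro sum_mono entry)
  finally show ?thesis by (simp add: M_def power3_eq_cube mult.assoc)
qed

lemma diagonalization_permute_columns: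
  fixes U :: "real^'n^'n"
  assumes p: "p permutes UNIV" and U: "orthogonal_matrix U"
  defines "V \<equiv> \<chi> i j. U $ i $ p j"
  shows "orthogonal_matrix V" "V ** Diag (perm_act p d) ** transpose V = U ** Diag d ** transpose U"
proof -
  have column: "column j V = column (p j) U" for j by (simp add: V_def column_def)
  show "orthogonal_matrix V"
    using U permutes_inj[OF p]
    unfolding orthogonal_matrix_orthonormal_columns column by (metis injD)
  have "(\<Sum>k\<in>UNIV. U $ a $ p k * d $ p k * U $ b $ p k) = (\<Sum>k\<in>UNIV. U $ a $ k * d $ k * U $ b $ k)"
    for a b
    using sum.permute[OF p, of "\<lambda>k. U $ a $ k * d $ k * U $ b $ k"] by (simp add: comp_def)
  then show "V ** Diag (perm_act p d) ** transpose V = U ** Diag d ** transpose U"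
    by (simp add: vec_eq_iff diagonalization_entry perm_act_def V_def)
qed

lemma symmetric_matrix_sorted_diagonalizable:
  fixes A :: "real^('n::{finite,linorder})^('n::{finite,linorder})"
  assumes "transpose A = A"
  obtains U d where "nonincreasing d" "orthogonal_matrix U" "A = U ** Diag d ** transpose U"
proof -
  obtain U d where U: "orthogonal_matrix U" "A = U ** Diag d ** transpose U"
    using symmetric_matrix_diagonalizable[OF assms] by blast
  obtain p where p: "p permutes UNIV" "nonincreasing (perm_act p d)"
    using sorting_permutation_exists by blast
  show ?thesis
    using that[OF p(2)] diagonalization_permute_columns[OF p(1) U(1)] U(2) by auto
qed

lemma inner_matrix_vector_transpose:
  fixes Q :: "real^'m^'n"
  shows "(Q *v x) \<bullet> y = x \<bullet> (transpose Q *v y)"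
  by (metis dot_lmul_matrix vector_transpose_matrix)

lemma orthogonal_matrix_transpose_inner:
  fixes Q :: "real^'n^'n"
  assumes "orthogonal_matrix Q"
  shows "(transpose Q *v x) \<bullet> (transpose Q *v y) = x \<bullet> y"
  using assms inner_matrix_vector_transpose[of "transpose Q" x]
  by (simp add: matrix_vector_mul_assoc orthogonal_matrix_def del: transpose_matrix_vector)

lemma Diag_matrix_vector: "Diag d *v z = (\<chi> m. d $ m * z $ m)"
  by (simp add: Diag_def matrix_vector_mult_def vec_eq_iff if_distrib[of "\<lambda>x. x * _"] sum.delta
      cong: if_cong)

lemma transpose_matrix_vector_component: "(transpose U *v x) $ m = column m U \<bullet> x"
  for U :: "real^'n^'n"
  by (simp add: vector_matrix_mult_def column_def inner_vec_def mult.commute)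

lemma quadratic_form_diagonalization:
  fixes U :: "real^'n^'n"
  shows "u \<bullet> ((U ** Diag d ** transpose U) *v u) = (\<Sum>m\<in>UNIV. d $ m * (column m U \<bullet> u)\<^sup>2)"
proof -
  have "u \<bullet> ((U ** Diag d ** transpose U) *v u) = (transpose U *v u) \<bullet> (Diag d *v (transpose U *v u))"
    by (metis inner_commute inner_matrix_vector_transpose matrix_vector_mul_assoc)
  then show ?thesis
    by (simp add: Diag_matrix_vector inner_vec_def transpose_matrix_vector_component
        power2_eq_square algebra_simps del: transpose_matrix_vector)
qed

definition orthonormal_family :: "'i set \<Rightarrow> ('i \<Rightarrow> 'a::real_inner) \<Rightarrow> bool" where
  "orthonormal_family I u \<longleftrightarrow> (\<forall>i\<in>I. \<forall>j\<in>I. u i \<bullet> u j = (if i = j then 1 else 0))"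

lemma orthogonal_matrix_columns_orthonormal:
  fixes U :: "real^'n^'n"
  assumes "orthogonal_matrix U"
  shows "orthonormal_family I (\<lambda>i. column i U)"
  using assms unfolding orthogonal_matrix_orthonormal_columns orthonormal_family_def
  by (auto simp: orthogonal_def norm_eq_1)

lemma bessel_inequality:
  assumes "finite I" and "orthonormal_family I u"
  shows "(\<Sum>i\<in>I. (c \<bullet> u i)\<^sup>2) \<le> c \<bullet> c"
proof -
  define p where "p = (\<Sum>i\<in>I. (c \<bullet> u i) *\<^sub>R u i)"
  have "u i \<bullet> p = c \<bullet> u i" if "i \<in> I" for i
  proof -
    have "u i \<bullet> p = (\<Sum>j\<in>I. if j = i then c \<bullet> u j else 0)"
      unfolding p_def inner_sum_right
      using assms(2) that by (intro sum.cong) (auto simp: orthonormal_family_def)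
    with assms(1) that show ?thesis by simp
  qed
  then have "p \<bullet> p = (\<Sum>i\<in>I. (c \<bullet> u i)\<^sup>2)"
    by (simp add: p_def inner_sum_left power2_eq_square)
  moreover have "c \<bullet> p = (\<Sum>i\<in>I. (c \<bullet> u i)\<^sup>2)"
    by (simp add: p_def inner_sum_right power2_eq_square)
  moreover have "0 \<le> (c - p) \<bullet> (c - p)" by simp
  ultimately show ?thesis by (simp add: inner_diff_left inner_diff_right inner_commute)
qed

lemma weighted_sum_le_top_sum:
  fixes w d :: "'n::finite \<Rightarrow> real"
  assumes w: "\<And>m. 0 \<le> w m" "\<And>m. w m \<le> 1" "(\<Sum>m\<in>UNIV. w m) = real (card K)"
    and top: "\<And>a b. a \<in> K \<Longrightarrow> b \<notin> K \<Longrightarrow> d b \<le> d a"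
  shows "(\<Sum>m\<in>UNIV. d m * w m) \<le> (\<Sum>m\<in>K. d m)"
proof (cases "K = {}")
  case True
  with w show ?thesis by (simp add: sum_nonneg_eq_0_iff)
next
  case False
  define c where "c = Min (d ` K)"
  have above: "c \<le> d a" if "a \<in> K" for a using that by (simp add: c_def)
  have below: "d b \<le> c" if "b \<notin> K" for b
    using top[OF _ that] Min_in[of "d ` K"] False by (auto simp: c_def)
  have split: "(\<Sum>m\<in>UNIV. f m) = (\<Sum>m\<in>K. f m) + (\<Sum>m\<in>-K. f m)" for f :: "'n \<Rightarrow> real"
    using sum.subset_diff[of K UNIV f] by (simp add: Compl_eq_Diff_UNIV)
  have "(\<Sum>m\<in>UNIV. d m * w m) - (\<Sum>m\<in>K. d m) = (\<Sum>m\<in>K. d m * (w m - 1)) + (\<Sum>m\<in>-K. d m * w m)"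
    by (simp add: split[of "\<lambda>m. d m * w m"] sum_subtractf algebra_simps)
  also have "\<dots> \<le> (\<Sum>m\<in>K. c * (w m - 1)) + (\<Sum>m\<in>-K. c * w m)"
    using above below w by (intro add_mono sum_mono) (auto simp: mult_right_mono_neg mult_right_mono)
  also have "\<dots> = c * ((\<Sum>m\<in>UNIV. w m) - real (card K))"
    by (simp add: split[of w] sum_subtractf sum_distrib_left algebra_simps)
  finally show ?thesis using w(3) by simp
qed

lemma ky_fan_upper_bound:
  fixes U :: "real^'n^'n" and u :: "'i \<Rightarrow> real^'n"
  assumes U: "orthogonal_matrix U" and A: "A = U ** Diag d ** transpose U"
    and I: "finite I" "orthonormal_family I u" "card I = card K"
    and top: "\<And>a b. a \<in> K \<Longrightarrow> b \<notin> K \<Longrightarrow> d $ b \<le> d $ a"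
  shows "(\<Sum>i\<in>I. u i \<bullet> (A *v u i)) \<le> (\<Sum>m\<in>K. d $ m)"
proof -
  define w where "w m = (\<Sum>i\<in>I. (column m U \<bullet> u i)\<^sup>2)" for m
  have "(\<Sum>i\<in>I. u i \<bullet> (A *v u i)) = (\<Sum>m\<in>UNIV. d $ m * w m)"
    unfolding A quadratic_form_diagonalization w_def sum_distrib_left by (rule sum.swap)
  also have "\<dots> \<le> (\<Sum>m\<in>K. d $ m)"
  proof (rule weighted_sum_le_top_sum[where d = "\<lambda>m. d $ m"])
    show "0 \<le> w m" for m by (simp add: w_def sum_nonneg)
    show "w m \<le> 1" for m
      using bessel_inequality[OF I(1,2), of "column m U"] orthogonal_matrix_columns_orthonormal[OF U, of UNIV]
      by (simp add: w_def orthonormal_family_def)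
    have "(\<Sum>m\<in>UNIV. w m) = (\<Sum>i\<in>I. (transpose U *v u i) \<bullet> (transpose U *v u i))"
      unfolding w_def inner_vec_def transpose_matrix_vector_component power2_eq_square inner_real_def
      by (rule sum.swap)
    also have "\<dots> = (\<Sum>i\<in>I. 1)"
      using I(2) by (intro sum.cong)
        (auto simp: orthogonal_matrix_transpose_inner[OF U] orthonormal_family_def
          simp del: transpose_matrix_vector)
    finally show "(\<Sum>m\<in>UNIV. w m) = real (card K)" using I(3) by simp
  qed (rule top)
  finally show ?thesis .
qed

lemma ky_fan_attained:
  fixes U :: "real^'n^'n"
  assumes U: "orthogonal_matrix U" and A: "A = U ** Diag d ** transpose U"
  shows "column i U \<bullet> (A *v column i U) = d $ i"
  using orthogonal_matrix_columns_orthonormal[OF U, of UNIV]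
  by (simp add: A quadratic_form_diagonalization orthonormal_family_def if_distrib[of "\<lambda>x. x\<^sup>2"]
      if_distrib[of "\<lambda>x. _ * x"] cong: if_cong)

definition down_closed :: "'a::order set \<Rightarrow> bool" where
  "down_closed K \<longleftrightarrow> (\<forall>a\<in>K. \<forall>b. b \<le> a \<longrightarrow> b \<in> K)"

lemma down_closed_atMost: "down_closed {..j}"
  and down_closed_lessThan: "down_closed {..<j}"
  by (auto simp: down_closed_def)

lemma nonincreasing_down_closed_le:
  assumes "nonincreasing d" "down_closed K" "a \<in> K" "b \<notin> K"
  shows "d $ b \<le> d $ a"
  using assms unfolding nonincreasing_def down_closed_def by (meson linear)

lemma sorted_diagonalization_sum_le:
  fixes A :: "real^('n::{finite,linorder})^('n::{finite,linorder})"
  assumes U: "orthogonal_matrix U" "A = U ** Diag d ** transpose U"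
    and V: "nonincreasing e" "orthogonal_matrix V" "A = V ** Diag e ** transpose V"
    and K: "down_closed K"
  shows "(\<Sum>m\<in>K. d $ m) \<le> (\<Sum>m\<in>K. e $ m)"
proof -
  have "(\<Sum>m\<in>K. d $ m) = (\<Sum>i\<in>K. column i U \<bullet> (A *v column i U))"
    using ky_fan_attained[OF U] by simp
  also have "\<dots> \<le> (\<Sum>m\<in>K. e $ m)"
    using nonincreasing_down_closed_le[OF V(1) K]
    by (intro ky_fan_upper_bound[OF V(2,3)] orthogonal_matrix_columns_orthonormal[OF U(1)]) auto
  finally show ?thesis .
qed

lemma sorted_diagonalization_unique:
  fixes A :: "real^('n::{finite,linorder})^('n::{finite,linorder})"
  assumes U: "nonincreasing d" "orthogonal_matrix U" "A = U ** Diag d ** transpose U"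
    and V: "nonincreasing e" "orthogonal_matrix V" "A = V ** Diag e ** transpose V"
  shows "d = e"
proof -
  have sum_eq: "(\<Sum>m\<in>K. d $ m) = (\<Sum>m\<in>K. e $ m)" if "down_closed K" for K
    using sorted_diagonalization_sum_le[OF U(2,3) V that] sorted_diagonalization_sum_le[OF V(2,3) U that]
    by linarith
  have "d $ j = e $ j" for j
  proof -
    have "{..j} = insert j {..<j}" by auto
    then show ?thesis
      using sum_eq[OF down_closed_atMost, of j] sum_eq[OF down_closed_lessThan, of j] by simp
  qed
  then show ?thesis by (simp add: vec_eq_iff)
qed

lemma eigvec_spectral_decomposition:
  fixes A :: "real^('n::{finite,linorder})^('n::{finite,linorder})"
  assumes "transpose A = A"
  shows "nonincreasing (eigvec A) \<and> (\<exists>U. orthogonal_matrix U \<and> A = U ** Diag (eigvec A) ** transpose U)"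
proof -
  have "\<exists>!d. nonincreasing d \<and> (\<exists>U. orthogonal_matrix U \<and> A = U ** Diag d ** transpose U)"
    using symmetric_matrix_sorted_diagonalizable[OF assms] sorted_diagonalization_unique by metis
  then show ?thesis
    unfolding eigvec_def nonincreasing_def[symmetric] by (rule theI')
qed

lemma eigvec_eqI:
  fixes A :: "real^('n::{finite,linorder})^('n::{finite,linorder})"
  assumes "nonincreasing d" "orthogonal_matrix U" "A = U ** Diag d ** transpose U"
  shows "eigvec A = d"
  using eigvec_spectral_decomposition[of A] diagonalization_symmetric[of U d] assms
    sorted_diagonalization_unique by metis

lemma eigvec_diagonalization_permutes:
  fixes V :: "real^('n::{finite,linorder})^('n::{finite,linorder})"
  assumes "orthogonal_matrix V"
  obtains p where "p permutes UNIV" "eigvec (V ** Diag v ** transpose V) = perm_act p v"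
proof -
  obtain p where p: "p permutes UNIV" "nonincreasing (perm_act p v)"
    using sorting_permutation_exists by blast
  show ?thesis
    using diagonalization_permute_columns[OF p(1) assms] that[OF p(1)] eigvec_eqI[OF p(2)] by metis
qed

section \<open>Sums of the largest eigenvalues\<close>

text \<open>For down-closed \<open>K\<close> this is the sum of the \<open>card K\<close> largest eigenvalues.\<close>

definition top_eig_sum :: "'n set \<Rightarrow> real^('n::{finite,linorder})^('n::{finite,linorder}) \<Rightarrow> real" where
  "top_eig_sum K A = (\<Sum>m\<in>K. eigvec A $ m)"

definition rayleigh_sum :: "'i set \<Rightarrow> ('i \<Rightarrow> real^'n) \<Rightarrow> real^'n^'n \<Rightarrow> real" where
  "rayleigh_sum I u A = (\<Sum>i\<in>I. u i \<bullet> (A *v u i))"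

lemma linear_rayleigh_sum: "linear (rayleigh_sum I u)"
  by (rule linearI)
    (simp_all add: rayleigh_sum_def matrix_vector_mult_add_rdistrib inner_add_right sum.distrib
      scaleR_matrix_vector_assoc[symmetric] sum_distrib_left)

lemma rayleigh_sum_le_top_eig_sum:
  assumes "A \<in> sym_mats" "down_closed K" "orthonormal_family K u"
  shows "rayleigh_sum K u A \<le> top_eig_sum K A"
proof -
  obtain U where "nonincreasing (eigvec A)" "orthogonal_matrix U" "A = U ** Diag (eigvec A) ** transpose U"
    using eigvec_spectral_decomposition assms(1) unfolding sym_mats_def by blast
  then show ?thesis
    unfolding rayleigh_sum_def top_eig_sum_def
    using assms(2,3) nonincreasing_down_closed_le by (intro ky_fan_upper_bound) auto
qed

lemma top_eig_sum_attained:
  assumes "A \<in> sym_mats"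
  obtains u where "orthonormal_family K u" "top_eig_sum K A = rayleigh_sum K u A"
proof -
  obtain U where U: "orthogonal_matrix U" "A = U ** Diag (eigvec A) ** transpose U"
    using eigvec_spectral_decomposition assms unfolding sym_mats_def by blast
  show ?thesis
  proof (rule that)
    show "orthonormal_family K (\<lambda>i. column i U)" by (rule orthogonal_matrix_columns_orthonormal[OF U(1)])
    show "top_eig_sum K A = rayleigh_sum K (\<lambda>i. column i U) A"
      using ky_fan_attained[OF U] by (simp add: top_eig_sum_def rayleigh_sum_def)
  qed
qed

lemma sym_mats_iff: "A \<in> sym_mats \<longleftrightarrow> (\<forall>i j. A $ i $ j = A $ j $ i)"
  by (auto simp: sym_mats_def vec_eq_iff transpose_def)

lemma subspace_sym_mats: "subspace sym_mats"
  by (auto simp: subspace_def sym_mats_iff)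

lemma closed_sym_mats: "closed sym_mats"
proof -
  have "sym_mats = (\<Inter>i. \<Inter>j. {A :: real^'n^'n. A $ i $ j = A $ j $ i})"
    by (auto simp: sym_mats_iff)
  also have "closed \<dots>"
    by (intro closed_INT ballI closed_Collect_eq continuous_intros)
  finally show ?thesis .
qed

lemma sym_mats_line: "X \<in> sym_mats \<Longrightarrow> H \<in> sym_mats \<Longrightarrow> X + t *\<^sub>R H \<in> sym_mats"
  by (simp add: sym_mats_iff)

lemma convex_on_top_eig_sum:
  fixes K :: "'n::{finite,linorder} set"
  assumes "down_closed K"
  shows "convex_on sym_mats (top_eig_sum K)"
proof (rule convex_onI)
  show "convex sym_mats" using subspace_sym_mats by (rule subspace_imp_convex)
  fix A B :: "real^('n::{finite,linorder})^('n::{finite,linorder})" and a :: real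
  assume AB: "A \<in> sym_mats" "B \<in> sym_mats" and a: "0 < a" "a < 1"
  then have "(1 - a) *\<^sub>R A + a *\<^sub>R B \<in> sym_mats"
    by (simp add: sym_mats_iff)
  then obtain u where u: "orthonormal_family K u"
    "top_eig_sum K ((1 - a) *\<^sub>R A + a *\<^sub>R B) = rayleigh_sum K u ((1 - a) *\<^sub>R A + a *\<^sub>R B)"
    by (rule top_eig_sum_attained)
  have "rayleigh_sum K u A \<le> top_eig_sum K A" "rayleigh_sum K u B \<le> top_eig_sum K B"
    using AB rayleigh_sum_le_top_eig_sum[OF _ assms u(1)] by auto
  then show "top_eig_sum K ((1 - a) *\<^sub>R A + a *\<^sub>R B) \<le> (1 - a) * top_eig_sum K A + a * top_eig_sum K B"
    using a by (simp add: u(2) linear_add[OF linear_rayleigh_sum] linear_scale[OF linear_rayleigh_sum]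
        add_mono mult_left_mono)
qed

lemma convex_on_line:
  fixes f :: "'a::real_vector \<Rightarrow> real"
  assumes "convex_on S f" and "\<And>t. x + t *\<^sub>R h \<in> S"
  shows "convex_on UNIV (\<lambda>t. f (x + t *\<^sub>R h))"
proof (rule convex_onI)
  fix s t a :: real assume a: "0 < a" "a < 1"
  have "f ((1 - a) *\<^sub>R (x + s *\<^sub>R h) + a *\<^sub>R (x + t *\<^sub>R h)) \<le> (1 - a) * f (x + s *\<^sub>R h) + a * f (x + t *\<^sub>R h)"
    using a assms(2) by (intro convex_onD[OF assms(1)]) auto
  moreover have "(1 - a) *\<^sub>R (x + s *\<^sub>R h) + a *\<^sub>R (x + t *\<^sub>R h) = x + ((1 - a) *\<^sub>R s + a *\<^sub>R t) *\<^sub>R h"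
    by (simp add: algebra_simps)
  ultimately show "f (x + ((1 - a) *\<^sub>R s + a *\<^sub>R t) *\<^sub>R h) \<le> (1 - a) * f (x + s *\<^sub>R h) + a * f (x + t *\<^sub>R h)"
    by (simp only:)
qed simp

lemma convex_on_right_derivative_exists:
  fixes f :: "real \<Rightarrow> real"
  assumes "convex_on UNIV f"
  shows "\<exists>l. ((\<lambda>t. (f t - f 0) / t) \<longlongrightarrow> l) (at_right 0)"
proof -
  have slope: "(f 0 - f t) / (0 - t) = (f t - f 0) / t" for t
    by (metis diff_0 divide_minus_right minus_diff_eq minus_divide_left)
  have mono: "(f s - f 0) / s \<le> (f t - f 0) / t" if "0 < s" "s \<le> t" for s t
  proof (cases "s = t")
    case False
    then show ?thesis
      using that convex_on_slope_le(1)[OF assms, of 0 t s] by (simp only: slope) simp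
  qed simp
  have bound: "f 0 - f (-1) \<le> (f t - f 0) / t" if "0 < t" for t
    using that convex_on_slope_le[OF assms, of "-1" t 0] by (simp only: slope) simp
  have "((\<lambda>t. (f t - f 0) / t) \<longlongrightarrow> Inf ((\<lambda>t. (f t - f 0) / t) ` ({0<..} \<inter> UNIV)))
      (at 0 within {0<..} \<inter> UNIV)"
    using mono bound by (intro Lim_right_bound) auto
  then show ?thesis by auto
qed

lemma abs_inner_matrix_vector_unit_le:
  fixes E :: "real^'n^'n"
  assumes "norm u = 1"
  shows "\<bar>u \<bullet> (E *v u)\<bar> \<le> real CARD('n) ^ 2 * norm E"
proof -
  have "\<bar>u \<bullet> (E *v u)\<bar> \<le> norm (E *v u)"
    using Cauchy_Schwarz_ineq2[of u "E *v u"] assms by simp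
  also have "\<dots> \<le> onorm ((*v) E)"
    using onorm[OF matrix_vector_mul_bounded_linear, of E u] assms by simp
  also have "\<dots> \<le> real CARD('n) * real CARD('n) * norm E"
    by (intro onorm_le_matrix_component
        order.trans[OF component_le_norm_cart Finite_Cartesian_Product.norm_nth_le])
  finally show ?thesis by (simp add: power2_eq_square)
qed

lemma abs_rayleigh_sum_le:
  fixes u :: "'i \<Rightarrow> real^'n"
  assumes "orthonormal_family I u"
  shows "\<bar>rayleigh_sum I u E\<bar> \<le> real (card I) * real CARD('n) ^ 2 * norm E"
proof -
  have "\<bar>rayleigh_sum I u E\<bar> \<le> (\<Sum>i\<in>I. \<bar>u i \<bullet> (E *v u i)\<bar>)"
    unfolding rayleigh_sum_def by (rule sum_abs)
  also have "\<dots> \<le> (\<Sum>i\<in>I. real CARD('n) ^ 2 * norm E)"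
    using assms by (intro sum_mono abs_inner_matrix_vector_unit_le) (simp add: orthonormal_family_def norm_eq_1)
  finally show ?thesis by simp
qed

lemma top_eig_sum_lipschitz:
  fixes A B :: "real^('n::{finite,linorder})^('n::{finite,linorder})"
  assumes "A \<in> sym_mats" "B \<in> sym_mats" "down_closed K"
  shows "\<bar>top_eig_sum K A - top_eig_sum K B\<bar> \<le> real CARD('n) ^ 3 * norm (A - B)"
proof -
  have "top_eig_sum K P - top_eig_sum K R \<le> real CARD('n) ^ 3 * norm (P - R)"
    if P: "P \<in> sym_mats" and R: "R \<in> sym_mats" for P R
  proof -
    obtain u where u: "orthonormal_family K u" "top_eig_sum K P = rayleigh_sum K u P"
      using top_eig_sum_attained[OF P] by blast
    have "top_eig_sum K P = rayleigh_sum K u R + rayleigh_sum K u (P - R)"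
      by (simp add: u(2) linear_diff[OF linear_rayleigh_sum])
    also have "\<dots> \<le> top_eig_sum K R + real (card K) * real CARD('n) ^ 2 * norm (P - R)"
      using rayleigh_sum_le_top_eig_sum[OF _ assms(3) u(1), of R] abs_rayleigh_sum_le[OF u(1), of "P - R"]
        R by simp
    also have "\<dots> \<le> top_eig_sum K R + real CARD('n) ^ 3 * norm (P - R)"
      by (simp add: card_mono mult_right_mono power3_eq_cube power2_eq_square mult.assoc)
    finally show ?thesis by simp
  qed
  from this[OF assms(1,2)] this[OF assms(2,1)] show ?thesis
    by (simp add: norm_minus_commute abs_le_iff)
qed

lemma eigvec_component_top_eig_sum:
  "eigvec A $ j = top_eig_sum {..j} A - top_eig_sum {..<j} A"
proof -
  have "{..j} = insert j {..<j}" by auto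
  then show ?thesis by (simp add: top_eig_sum_def)
qed

lemma lipschitz_on_eigvec:
  "(2 * real CARD('n) ^ 4)-lipschitz_on sym_mats
    (eigvec :: real^('n::{finite,linorder})^('n::{finite,linorder}) \<Rightarrow> _)"
proof (rule lipschitz_onI)
  fix A B :: "real^('n::{finite,linorder})^('n::{finite,linorder})"
  assume AB: "A \<in> sym_mats" "B \<in> sym_mats"
  have "norm (eigvec A - eigvec B) \<le> (\<Sum>j\<in>UNIV. \<bar>(eigvec A - eigvec B) $ j\<bar>)"
    by (rule norm_le_l1_cart)
  also have "\<dots> \<le> (\<Sum>j\<in>(UNIV::'n set). 2 * real CARD('n) ^ 3 * norm (A - B))"
  proof (rule sum_mono)
    fix j :: 'n
    show "\<bar>(eigvec A - eigvec B) $ j\<bar> \<le> 2 * real CARD('n) ^ 3 * norm (A - B)"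
      using top_eig_sum_lipschitz[OF AB down_closed_atMost, of j]
        top_eig_sum_lipschitz[OF AB down_closed_lessThan, of j]
      by (simp add: eigvec_component_top_eig_sum abs_le_iff)
  qed
  finally show "dist (eigvec A) (eigvec B) \<le> 2 * real CARD('n) ^ 4 * dist A B"
    by (simp add: dist_norm power_eq_if mult_ac)
qed simp

lemma top_eig_sum_right_derivative_exists:
  assumes "X \<in> sym_mats" "H \<in> sym_mats" "down_closed K"
  shows "\<exists>l. ((\<lambda>t. (top_eig_sum K (X + t *\<^sub>R H) - top_eig_sum K X) / t) \<longlongrightarrow> l) (at_right 0)"
  using convex_on_right_derivative_exists[OF convex_on_line[OF convex_on_top_eig_sum[OF assms(3)]]]
    sym_mats_line[OF assms(1,2)] by simp

lemma eigvec_dir_tendsto: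
  fixes X H :: "real^('n::{finite,linorder})^('n::{finite,linorder})"
  assumes "X \<in> sym_mats" "H \<in> sym_mats"
  shows "((\<lambda>t. (1 / t) *\<^sub>R (eigvec (X + t *\<^sub>R H) - eigvec X)) \<longlongrightarrow> eigvec_dir X H) (at_right 0)"
proof -
  define q where "q K t = (top_eig_sum K (X + t *\<^sub>R H) - top_eig_sum K X) / t" for K t
  have "\<forall>j. \<exists>l. ((\<lambda>t. q {..j} t - q {..<j} t) \<longlongrightarrow> l) (at_right 0)"
  proof
    fix j :: 'n
    obtain l l' where "(q {..j} \<longlongrightarrow> l) (at_right 0)" "(q {..<j} \<longlongrightarrow> l') (at_right 0)"
      using top_eig_sum_right_derivative_exists[OF assms down_closed_atMost]
        top_eig_sum_right_derivative_exists[OF assms down_closed_lessThan]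
      unfolding q_def by blast
    then show "\<exists>l. ((\<lambda>t. q {..j} t - q {..<j} t) \<longlongrightarrow> l) (at_right 0)"
      by (blast intro: tendsto_diff)
  qed
  then obtain L where L: "\<And>j. ((\<lambda>t. q {..j} t - q {..<j} t) \<longlongrightarrow> L j) (at_right 0)"
    by metis
  have "((1 / t) *\<^sub>R (eigvec (X + t *\<^sub>R H) - eigvec X)) $ j = q {..j} t - q {..<j} t" for t j
    by (simp add: q_def eigvec_component_top_eig_sum diff_divide_distrib)
  then have lim: "((\<lambda>t. (1 / t) *\<^sub>R (eigvec (X + t *\<^sub>R H) - eigvec X)) \<longlongrightarrow> (\<chi> j. L j)) (at_right 0)"
    by (intro vec_tendstoI) (simp add: L)
  then have "eigvec_dir X H = (\<chi> j. L j)"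
    unfolding eigvec_dir_def by (intro tendsto_Lim) simp_all
  with lim show ?thesis by simp
qed

lemma eigvec_dir_tendsto_sequentially:
  fixes X H :: "real^('n::{finite,linorder})^('n::{finite,linorder})"
  assumes "X \<in> sym_mats" "H \<in> sym_mats" and t: "\<And>k. t k > 0" "t \<longlonglongrightarrow> 0"
  shows "(\<lambda>k. (1 / t k) *\<^sub>R (eigvec (X + t k *\<^sub>R H) - eigvec X)) \<longlonglongrightarrow> eigvec_dir X H"
proof -
  have "filterlim t (at_right 0) sequentially"
    using t by (intro tendsto_imp_filterlim_at_right) auto
  from filterlim_compose[OF eigvec_dir_tendsto[OF assms(1,2)] this] show ?thesis
    by (simp add: comp_def)
qed

section \<open>Tangent cones of spectral sets\<close>

lemma subspace_add_scaleR_cancel: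
  assumes "subspace S" "x \<in> S" "x + t *\<^sub>R w \<in> S" "t \<noteq> 0"
  shows "w \<in> S"
proof -
  have "(1 / t) *\<^sub>R ((x + t *\<^sub>R w) - x) \<in> S"
    using assms by (blast intro: subspace_scale subspace_diff)
  with assms(4) show ?thesis by simp
qed

lemma tangent_cone_subset_closed_subspace:
  assumes S: "closed S" "subspace S" and "C \<subseteq> S" "x \<in> S"
  shows "tangent_cone C x \<subseteq> S"
proof
  fix h assume "h \<in> tangent_cone C x"
  then obtain t w where t: "\<And>k. t k > 0" and w: "w \<longlonglongrightarrow> h" and C: "\<And>k. x + t k *\<^sub>R w k \<in> C"
    unfolding tangent_cone_def by blast
  have "w k \<in> S" for k
    using subspace_add_scaleR_cancel[OF S(2) assms(4)] C assms(3) t[of k] by force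
  with S(1) w show "h \<in> S" by (meson closed_sequentially)
qed

lemma eigvec_difference_quotient_tendsto:
  fixes X H :: "real^('n::{finite,linorder})^('n::{finite,linorder})"
  assumes "X \<in> sym_mats" "H \<in> sym_mats" "\<And>k. w k \<in> sym_mats"
    and t: "\<And>k. t k > 0" "t \<longlonglongrightarrow> 0" and w: "w \<longlonglongrightarrow> H"
  shows "(\<lambda>k. (1 / t k) *\<^sub>R (eigvec (X + t k *\<^sub>R w k) - eigvec X)) \<longlonglongrightarrow> eigvec_dir X H"
proof -
  define a where "a k = (1 / t k) *\<^sub>R (eigvec (X + t k *\<^sub>R w k) - eigvec (X + t k *\<^sub>R H))" for k
  define b where "b k = (1 / t k) *\<^sub>R (eigvec (X + t k *\<^sub>R H) - eigvec X)" for k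
  have b: "b \<longlonglongrightarrow> eigvec_dir X H"
    unfolding b_def by (rule eigvec_dir_tendsto_sequentially[OF assms(1,2) t])
  have "\<forall>k. norm (a k) \<le> 2 * real CARD('n) ^ 4 * norm (w k - H)"
  proof
    fix k
    have "dist (eigvec (X + t k *\<^sub>R w k)) (eigvec (X + t k *\<^sub>R H))
        \<le> 2 * real CARD('n) ^ 4 * dist (X + t k *\<^sub>R w k) (X + t k *\<^sub>R H)"
      by (rule lipschitz_onD[OF lipschitz_on_eigvec]) (simp_all add: sym_mats_line assms(1-3))
    then have "norm (eigvec (X + t k *\<^sub>R w k) - eigvec (X + t k *\<^sub>R H))
        \<le> 2 * real CARD('n) ^ 4 * norm (t k *\<^sub>R (w k - H))"
      by (simp add: dist_norm scaleR_diff_right)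
    with t(1)[of k] show "norm (a k) \<le> 2 * real CARD('n) ^ 4 * norm (w k - H)"
      by (simp add: a_def divide_le_eq mult.commute mult.left_commute)
  qed
  moreover have "(\<lambda>k. 2 * real CARD('n) ^ 4 * norm (w k - H)) \<longlonglongrightarrow> 0"
    using w by (intro tendsto_mult_right_zero tendsto_norm_zero) (simp add: LIM_zero)
  ultimately have "a \<longlonglongrightarrow> 0"
    by (rule Lim_null_comparison[OF always_eventually])
  from tendsto_add[OF this b] have "(\<lambda>k. a k + b k) \<longlonglongrightarrow> eigvec_dir X H"
    by simp
  then show ?thesis by (simp add: a_def b_def algebra_simps)
qed

lemma spectral_set_diagonalization_mem:
  fixes V :: "real^('n::{finite,linorder})^('n::{finite,linorder})"
  assumes "symmetric_set \<Theta>" and "orthogonal_matrix V" and "v \<in> \<Theta>"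
  shows "V ** Diag v ** transpose V \<in> {Y \<in> sym_mats. eigvec Y \<in> \<Theta>}"
proof -
  obtain p where p: "p permutes UNIV" "eigvec (V ** Diag v ** transpose V) = perm_act p v"
    using eigvec_diagonalization_permutes[OF assms(2)] by blast
  have "perm_act p v \<in> \<Theta>"
    using assms(1,3) p(1) unfolding symmetric_set_def by blast
  with p(2) show ?thesis by (simp add: sym_mats_def diagonalization_symmetric)
qed

lemma tangent_cone_spectral_set_subset:
  fixes X :: "real^('n::{finite,linorder})^('n::{finite,linorder})"
  assumes C: "C = {Y \<in> sym_mats. eigvec Y \<in> \<Theta>}" and X: "X \<in> C"
    and H: "H \<in> tangent_cone C X"
  shows "eigvec_dir X H \<in> tangent_cone \<Theta> (eigvec X)"
proof -
  obtain t w where t: "\<And>k. t k > 0" "t \<longlonglongrightarrow> 0" and w: "w \<longlonglongrightarrow> H"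
    and wC: "\<And>k. X + t k *\<^sub>R w k \<in> C"
    using H unfolding tangent_cone_def by blast
  have XS: "X \<in> sym_mats" using X C by simp
  define v where "v k = (1 / t k) *\<^sub>R (eigvec (X + t k *\<^sub>R w k) - eigvec X)" for k
  have "w k \<in> sym_mats" for k
    using subspace_add_scaleR_cancel[OF subspace_sym_mats XS, of "t k" "w k"] wC[of k] t(1)[of k] C
    by simp
  moreover have "H \<in> sym_mats"
    using tangent_cone_subset_closed_subspace[OF closed_sym_mats subspace_sym_mats _ XS, of C] H C
    by blast
  ultimately have "v \<longlonglongrightarrow> eigvec_dir X H"
    unfolding v_def using eigvec_difference_quotient_tendsto[OF XS _ _ t w] by blast
  moreover have "eigvec X + t k *\<^sub>R v k \<in> \<Theta>" for k
    using wC[of k] t(1)[of k] C by (simp add: v_def)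
  ultimately show ?thesis
    unfolding tangent_cone_def using t by blast
qed

lemma replace_eigenvalues_norm_le:
  fixes Y :: "real^('n::{finite,linorder})^('n::{finite,linorder})"
  assumes "Y \<in> sym_mats"
  obtains V where "orthogonal_matrix V"
    "\<And>v. norm (V ** Diag v ** transpose V - Y) \<le> real CARD('n) ^ 3 * norm (v - eigvec Y)"
proof -
  obtain V where V: "orthogonal_matrix V" "Y = V ** Diag (eigvec Y) ** transpose V"
    using eigvec_spectral_decomposition assms unfolding sym_mats_def by blast
  have "V ** Diag v ** transpose V - Y = V ** Diag (v - eigvec Y) ** transpose V" for v
    by (subst V(2)) (simp add: linear_diff[OF linear_diagonalization])
  with that[OF V(1)] norm_diagonalization_le[OF V(1)] show ?thesis by simp
qed

lemma tangent_cone_spectral_set_supset: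
  fixes X :: "real^('n::{finite,linorder})^('n::{finite,linorder})"
  assumes \<Theta>: "symmetric_set \<Theta>" and C: "C = {Y \<in> sym_mats. eigvec Y \<in> \<Theta>}" and X: "X \<in> C"
    and H: "H \<in> sym_mats" and D: "eigvec_dir X H \<in> tangent_cone \<Theta> (eigvec X)"
  shows "H \<in> tangent_cone C X"
proof -
  obtain t d where t: "\<And>k. t k > 0" "t \<longlonglongrightarrow> 0" and d: "d \<longlonglongrightarrow> eigvec_dir X H"
    and d\<Theta>: "\<And>k. eigvec X + t k *\<^sub>R d k \<in> \<Theta>"
    using D unfolding tangent_cone_def by blast
  have XS: "X \<in> sym_mats" using X C by simp
  define Y where "Y k = X + t k *\<^sub>R H" for k
  have "\<exists>V. orthogonal_matrix V \<and>
      (\<forall>v. norm (V ** Diag v ** transpose V - Y k) \<le> real CARD('n) ^ 3 * norm (v - eigvec (Y k)))" for k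
    by (rule replace_eigenvalues_norm_le[OF sym_mats_line[OF XS H], of "t k", folded Y_def]) blast
  then obtain V where V: "\<And>k. orthogonal_matrix (V k)"
    "\<And>k v. norm (V k ** Diag v ** transpose (V k) - Y k) \<le> real CARD('n) ^ 3 * norm (v - eigvec (Y k))"
    by (metis (no_types))
  \<comment> \<open>Keep the eigenvectors of \<open>X + t H\<close>, replace its eigenvalues by \<open>\<lambda>(X) + t d\<close>.\<close>
  define Z where "Z k = V k ** Diag (eigvec X + t k *\<^sub>R d k) ** transpose (V k)" for k
  define w where "w k = (1 / t k) *\<^sub>R (Z k - X)" for k
  define e where "e k = d k - (1 / t k) *\<^sub>R (eigvec (X + t k *\<^sub>R H) - eigvec X)" for k
  have ZC: "X + t k *\<^sub>R w k \<in> C" for k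
    using spectral_set_diagonalization_mem[OF \<Theta> V(1) d\<Theta>] t(1)[of k] C by (simp add: w_def Z_def)
  have bound: "\<forall>k. norm (w k - H) \<le> real CARD('n) ^ 3 * norm (e k)"
  proof
    fix k
    have "w k - H = (1 / t k) *\<^sub>R (Z k - Y k)"
      using t(1)[of k] by (simp add: w_def Y_def algebra_simps)
    moreover have "eigvec X + t k *\<^sub>R d k - eigvec (Y k) = t k *\<^sub>R e k"
      using t(1)[of k] by (simp add: e_def Y_def algebra_simps)
    ultimately show "norm (w k - H) \<le> real CARD('n) ^ 3 * norm (e k)"
      using V(2)[of k "eigvec X + t k *\<^sub>R d k"] t(1)[of k]
      by (simp add: Z_def divide_le_eq mult.commute mult.left_commute)
  qed
  have "e \<longlonglongrightarrow> 0"
    using tendsto_diff[OF d eigvec_dir_tendsto_sequentially[OF XS H t]] by (simp add: e_def[abs_def])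
  then have "(\<lambda>k. real CARD('n) ^ 3 * norm (e k)) \<longlonglongrightarrow> 0"
    by (intro tendsto_mult_right_zero tendsto_norm_zero)
  with bound have "(\<lambda>k. w k - H) \<longlonglongrightarrow> 0"
    by (rule Lim_null_comparison[OF always_eventually])
  then have "w \<longlonglongrightarrow> H" by (simp add: LIM_zero_iff)
  with t ZC show ?thesis
    unfolding tangent_cone_def by (intro CollectI exI[of _ t] exI[of _ w]) simp
qed

theorem corollary3p6:
  fixes \<Theta> :: "(real ^ ('n::{finite,linorder})) set"
    and C :: "(real ^ ('n::{finite,linorder}) ^ ('n::{finite,linorder})) set"
    and X :: "real ^ ('n::{finite,linorder}) ^ ('n::{finite,linorder})"
  assumes "symmetric_set \<Theta>"
    and "C = {Y \<in> sym_mats. eigvec Y \<in> \<Theta>}"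
    and "X \<in> C"
  shows "tangent_cone C X = {H \<in> sym_mats. eigvec_dir X H \<in> tangent_cone \<Theta> (eigvec X)}"
proof -
  have "tangent_cone C X \<subseteq> sym_mats"
    using assms(2,3) by (intro tangent_cone_subset_closed_subspace closed_sym_mats subspace_sym_mats) auto
  with tangent_cone_spectral_set_subset[OF assms(2,3)] tangent_cone_spectral_set_supset[OF assms]
  show ?thesis by blast
qed

end
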